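(* In the setting described in the context, for every meta-epoch $t$, every round $r\in\{0,\dots,R-1\}$, every client $m\in S_t^{\lambda_r}$ and every $j\in\{0,\dots,N-1\}$, $$\mathbb{E}\big[\|x^{r,j+1}_{m,\star}-x_\star\|^2\big]\le\gamma^2\Big(\frac{MN^2}{2C^2}+2N^2\Big)\tilde\sigma_\star^2+\frac{\gamma^2N}{2}\sigma_\star^2,$$ where $\tilde\sigma_\star^2=\frac1M\sum_{m=1}^M\|\nabla f_m(x_\star)\|^2$ and $\sigma_\star^2=\frac{1}{MN}\sum_{m=1}^M\sum_{j}\|\nabla f_m^j(x_\star)\|^2$.
   Context: Setting. There are $M$ clients, each holding $N$ data points. For $m\in[M]$ and $j\in\{0,\dots,N-1\}$, $f_m^j:\mathbb{R}^d\to\mathbb{R}$ is differentiable. Define $f_m=\frac1N\sum_j f_m^j$ and $f=\frac1M\sum_m f_m$, and let $x_\star$ be a minimizer of $f$. Let $\gamma>0$ and let $C$ be a cohort size with $M=CR$ for an integer $R$. Random sampling. In meta-epoch $t$, the $M$ clients are partitioned uniformly at random into $R$ disjoint cohorts of size $C$, taken in a uniformly random order $S_t^{\lambda_0},\dots,S_t^{\lambda_{R-1}}$. Each client $m$ has an independent uniformly random permutation $\pi_m=(\pi_m^0,\dots,\pi_m^{N-1})$ of its data indices, independent of the partition. Star sequence. Set $x^0_\star=x_\star$. For each $r$ and each $m\in S_t^{\lambda_r}$, set $x^{r,0}_{m,\star}=x^r_\star$ and $x^{r,j+1}_{m,\star}=x^{r,j}_{m,\star}-\gamma\nabla f_m^{\pi_m^j}(x_\star)$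 for $j=0,\dots,N-1$, and then $x^{r+1}_\star=\frac1C\sum_{m\in S_t^{\lambda_r}}x^{r,N}_{m,\star}$. Expectation is over the random partition and permutations. *)

theory Defs
  imports "HOL-Analysis.Analysis" "HOL-Probability.Probability"
begin

definition grad :: "('a::real_inner \<Rightarrow> real) \<Rightarrow> 'a \<Rightarrow> 'a" where
  "grad F x = (THE D. GDERIV F x :> D)"

text \<open>Local star iterates of one client: start at x0, step j uses the
  vector h j (= gradient of the j-th sampled data point at x_star).\<close>
fun local_iter :: "real \<Rightarrow> (nat \<Rightarrow> 'a::real_vector) \<Rightarrow> 'a \<Rightarrow> nat \<Rightarrow> 'a" where
  "local_iter \<gamma> h x0 0 = x0"
| "local_iter \<gamma> h x0 (Suc j) = local_iter \<gamma> h x0 j - \<gamma> *\<^sub>R h j"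

definition client_steps ::
  "(nat \<Rightarrow> nat \<Rightarrow> 'a::real_inner \<Rightarrow> real) \<Rightarrow> 'a \<Rightarrow> (nat \<Rightarrow> nat \<Rightarrow> nat) \<Rightarrow> nat \<Rightarrow> nat \<Rightarrow> 'a" where
  "client_steps f xs \<pi> m k = grad (f m (\<pi> m k)) xs"

text \<open>Round iterates x^r_star. The random ordered partition into cohorts is
  encoded by a permutation sigma of {..<M}: cohort number r (i.e. S^{lambda_r})
  is sigma ` {r*C ..< r*C + C}.\<close>
fun star_round ::
  "real \<Rightarrow> nat \<Rightarrow> nat \<Rightarrow> (nat \<Rightarrow> nat \<Rightarrow> 'a::real_inner \<Rightarrow> real) \<Rightarrow> 'a
   \<Rightarrow> (nat \<Rightarrow> nat) \<Rightarrow> (nat \<Rightarrow> nat \<Rightarrow> nat) \<Rightarrow> nat \<Rightarrow> 'a" where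
  "star_round \<gamma> N C f xs \<sigma> \<pi> 0 = xs"
| "star_round \<gamma> N C f xs \<sigma> \<pi> (Suc r) =
     (1 / real C) *\<^sub>R
       (\<Sum>i<C. local_iter \<gamma> (client_steps f xs \<pi> (\<sigma> (r * C + i)))
                  (star_round \<gamma> N C f xs \<sigma> \<pi> r) N)"

text \<open>Sample space: uniformly random permutation sigma of the clients
  (giving the random ordered cohort partition) and independent uniformly
  random permutations pi m of {..<N} for each client m < M.\<close>
definition sample_space :: "nat \<Rightarrow> nat \<Rightarrow> ((nat \<Rightarrow> nat) \<times> (nat \<Rightarrow> nat \<Rightarrow> nat)) set" where
  "sample_space M N = {\<sigma>. \<sigma> permutes {..<M}} \<times> (PiE {..<M} (\<lambda>_. {p. p permutes {..<N}}))"

end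

theory Submission
  imports Defs
begin

(* At the minimizer the client gradients g_m = grad f_m(x_star) sum to zero.  Unrolling the
   star sequence, x^{r,j+1}_{m,star} - x_star is minus (gamma N / C) times the sum of g over the
   r C clients of the earlier cohorts, minus gamma times the first j+1 data gradients of client m
   in the order pi_m.  For fixed cohorts the data part is a sample without replacement, whose
   second moment exceeds its squared mean by at most half the sum of squares.  Averaging then over
   the client permutation, the earlier-cohort part is a sample without replacement from vectors
   of mean zero, and it is negatively correlated with g_m.  Collecting terms gives the bound with
   (j+1)^2 <= N^2 in place of the stated 2 N^2. *)

section \<open>Sums over permutations\<close>

lemma sum_reindex_permutes:
  assumes "p permutes S"
  shows "(\<Sum>a\<in>S. F (p a)) = (\<Sum>a\<in>S. F a)"
  using sum.permute[OF assms, of F] by (simp add: comp_def)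

lemma fact_reduce2:
  assumes "2 \<le> n"
  shows "fact n = real n * (real n - 1) * fact (n - 2)"
proof -
  obtain m where "n = Suc (Suc m)"
    using assms by (metis add_2_eq_Suc le_Suc_ex)
  then show ?thesis
    by (simp add: algebra_simps)
qed

lemma sum_permutations_apply:
  fixes F :: "'a \<Rightarrow> real"
  assumes S: "finite S" and k: "k \<in> S"
  shows "(\<Sum>p | p permutes S. F (p k)) = fact (card S - 1) * (\<Sum>a\<in>S. F a)"
proof -
  have card_pos: "card S > 0"
    using S k card_gt_0_iff by blast
  define T where "T k = (\<Sum>p | p permutes S. F (p k))" for k
  have T_eq: "T k' = T k" if "k' \<in> S" for k'
    using sum_permutations_compose_right[OF permutes_swap_id[OF that k], of "\<lambda>p. F (p k')"]
    by (simp add: T_def)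
  have "real (card S) * T k = (\<Sum>k'\<in>S. T k')"
    using T_eq by simp
  also have "\<dots> = (\<Sum>p | p permutes S. \<Sum>k'\<in>S. F (p k'))"
    unfolding T_def by (rule sum.swap)
  also have "\<dots> = (\<Sum>p | p permutes S. \<Sum>a\<in>S. F a)"
    by (rule sum.cong[OF refl]) (simp add: sum_reindex_permutes)
  also have "\<dots> = real (card S) * (fact (card S - 1) * (\<Sum>a\<in>S. F a))"
    using S card_pos by (simp add: card_permutations fact_reduce[OF card_pos])
  finally show ?thesis
    using card_pos by (simp add: T_def)
qed

lemma permutes_map_pairE:
  assumes "finite S" "k \<in> S" "k' \<in> S" "k \<noteq> k'" "j \<in> S" "j' \<in> S" "j \<noteq> j'"
  obtains q where "q permutes S" "q k = j" "q k' = j'"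
proof -
  define t where "t = Transposition.transpose k j"
  define q where "q = Transposition.transpose (t k') j' \<circ> t"
  have "t permutes S" "t k' \<in> S"
    using assms by (auto simp: t_def permutes_swap_id Transposition.transpose_def)
  then have "q permutes S"
    unfolding q_def using assms by (intro permutes_compose permutes_swap_id) auto
  moreover have "t k' \<noteq> j"
    using assms by (auto simp: t_def Transposition.transpose_def)
  then have "q k = j" "q k' = j'"
    using assms by (auto simp: q_def t_def Transposition.transpose_def)
  ultimately show thesis
    by (rule that)
qed

lemma sum_offdiag_reindex_permutes:
  fixes F :: "'a \<Rightarrow> 'a \<Rightarrow> 'b::ab_group_add"
  assumes S: "finite S" and p: "p permutes S"
  shows "(\<Sum>a\<in>S. \<Sum>b\<in>S - {a}. F (p a) (p b)) = (\<Sum>a\<in>S. \<Sum>b\<in>S - {a}. F a b)"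
proof -
  have "(\<Sum>a\<in>S. \<Sum>b\<in>S - {a}. F (p a) (p b)) = (\<Sum>a\<in>S. (\<Sum>b\<in>S. F (p a) (p b)) - F (p a) (p a))"
    using S by (intro sum.cong refl) (simp add: sum_diff1)
  also have "\<dots> = (\<Sum>a\<in>S. (\<Sum>b\<in>S. F a b) - F a a)"
    using sum_reindex_permutes[OF p, of "\<lambda>a. (\<Sum>b\<in>S. F a b) - F a a"]
    by (simp add: sum_reindex_permutes[OF p])
  also have "\<dots> = (\<Sum>a\<in>S. \<Sum>b\<in>S - {a}. F a b)"
    using S by (intro sum.cong refl) (simp add: sum_diff1)
  finally show ?thesis .
qed

lemma sum_permutations_apply2:
  fixes F :: "'a \<Rightarrow> 'a \<Rightarrow> real"
  assumes S: "finite S" and k: "k \<in> S" "k' \<in> S" "k \<noteq> k'"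
  shows "(\<Sum>p | p permutes S. F (p k) (p k')) = fact (card S - 2) * (\<Sum>a\<in>S. \<Sum>b\<in>S - {a}. F a b)"
proof -
  define T where "T j j' = (\<Sum>p | p permutes S. F (p j) (p j'))" for j j'
  have T_eq: "T j j' = T k k'" if j: "j \<in> S" "j' \<in> S - {j}" for j j'
  proof -
    have "j' \<in> S" "j \<noteq> j'"
      using j by auto
    then obtain q where q: "q permutes S" "q k = j" "q k' = j'"
      by (rule permutes_map_pairE[OF S k j(1)])
    show ?thesis
      using sum_permutations_compose_right[OF q(1), of "\<lambda>p. F (p k) (p k')"] q
      by (simp add: T_def)
  qed
  have card2: "card S \<ge> 2"
    using card_mono[OF S, of "{k, k'}"] k by simp
  have "real (card S) * (real (card S) - 1) * T k k' = (\<Sum>j\<in>S. \<Sum>j'\<in>S - {j}. T k k')"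
    using S card2 by (simp add: card_Diff_singleton of_nat_diff)
  also have "\<dots> = (\<Sum>j\<in>S. \<Sum>j'\<in>S - {j}. T j j')"
    using T_eq by (intro sum.cong refl) auto
  also have "\<dots> = (\<Sum>p | p permutes S. \<Sum>j\<in>S. \<Sum>j'\<in>S - {j}. F (p j) (p j'))"
    unfolding T_def by (subst sum.swap) (intro sum.cong refl, rule sum.swap)
  also have "\<dots> = fact (card S) * (\<Sum>a\<in>S. \<Sum>b\<in>S - {a}. F a b)"
    using S by (simp add: sum_offdiag_reindex_permutes card_permutations)
  finally show ?thesis
    using card2 by (simp add: T_def fact_reduce2)
qed

lemma power2_norm_sum:
  fixes v :: "'a \<Rightarrow> 'b::real_inner"
  assumes "finite S"
  shows "(norm (\<Sum>a\<in>S. v a))\<^sup>2 = (\<Sum>a\<in>S. (norm (v a))\<^sup>2) + (\<Sum>a\<in>S. \<Sum>b\<in>S - {a}. v a \<bullet> v b)"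
proof -
  have "(norm (\<Sum>a\<in>S. v a))\<^sup>2 = (\<Sum>a\<in>S. \<Sum>b\<in>S. v a \<bullet> v b)"
    by (simp add: power2_norm_eq_inner inner_sum_left inner_sum_right) (rule sum.swap)
  also have "\<dots> = (\<Sum>a\<in>S. (norm (v a))\<^sup>2 + (\<Sum>b\<in>S - {a}. v a \<bullet> v b))"
    using assms by (intro sum.cong refl) (simp add: sum.remove power2_norm_eq_inner)
  finally show ?thesis
    by (simp add: sum.distrib)
qed

lemma power2_norm_add:
  fixes x y :: "'a::real_inner"
  shows "(norm (x + y))\<^sup>2 = (norm x)\<^sup>2 + 2 * (x \<bullet> y) + (norm y)\<^sup>2"
  by (simp add: power2_norm_eq_inner inner_add_left inner_add_right inner_commute)

lemma sum_permutations_power2_norm_sum: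
  fixes v :: "'a \<Rightarrow> 'b::real_inner"
  assumes S: "finite S" and L: "L \<subseteq> S"
  shows "(\<Sum>p | p permutes S. (norm (\<Sum>l\<in>L. v (p l)))\<^sup>2)
       = fact (card S - 1) * real (card L) * (\<Sum>a\<in>S. (norm (v a))\<^sup>2)
         + fact (card S - 2) * real (card L) * (real (card L) - 1) * (\<Sum>a\<in>S. \<Sum>b\<in>S - {a}. v a \<bullet> v b)"
proof -
  let ?P = "{p. p permutes S}"
  define D where "D = (\<Sum>a\<in>S. (norm (v a))\<^sup>2)"
  define X where "X = (\<Sum>a\<in>S. \<Sum>b\<in>S - {a}. v a \<bullet> v b)"
  have finL: "finite L"
    using S L by (rule finite_subset[rotated])
  have "(\<Sum>p\<in>?P. (norm (\<Sum>l\<in>L. v (p l)))\<^sup>2)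
      = (\<Sum>p\<in>?P. (\<Sum>l\<in>L. (norm (v (p l)))\<^sup>2) + (\<Sum>l\<in>L. \<Sum>l'\<in>L - {l}. v (p l) \<bullet> v (p l')))"
    using finL by (simp add: power2_norm_sum)
  also have "\<dots> = (\<Sum>l\<in>L. \<Sum>p\<in>?P. (norm (v (p l)))\<^sup>2) + (\<Sum>l\<in>L. \<Sum>l'\<in>L - {l}. \<Sum>p\<in>?P. v (p l) \<bullet> v (p l'))"
    by (simp add: sum.distrib sum.swap[of _ ?P] sum.swap[of _ _ "L - {_}"])
  also have "\<dots> = (\<Sum>l\<in>L. fact (card S - 1) * D) + (\<Sum>l\<in>L. \<Sum>l'\<in>L - {l}. fact (card S - 2) * X)"
  proof -
    have "(\<Sum>p\<in>?P. (norm (v (p l)))\<^sup>2) = fact (card S - 1) * D" if "l \<in> L" for l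
      using sum_permutations_apply[OF S, of l "\<lambda>a. (norm (v a))\<^sup>2"] that L
      unfolding D_def by auto
    moreover have "(\<Sum>p\<in>?P. v (p l) \<bullet> v (p l')) = fact (card S - 2) * X"
      if "l \<in> L" "l' \<in> L - {l}" for l l'
      using sum_permutations_apply2[OF S, of l l' "\<lambda>a b. v a \<bullet> v b"] that L
      unfolding X_def by auto
    ultimately show ?thesis
      by simp
  qed
  also have "\<dots> = fact (card S - 1) * real (card L) * D + fact (card S - 2) * real (card L) * (real (card L) - 1) * X"
  proof -
    have "real (card (L - {l})) = real (card L) - 1" if "l \<in> L" for l
    proof -
      have "card L > 0"
        using finL that card_gt_0_iff by blast
      then show ?thesis
        using finL that by (simp add: card_Diff_singleton of_nat_diff Suc_le_eq)
    qed
    then show ?thesis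
      by (simp add: sum_distrib_left)
  qed
  finally show ?thesis
    unfolding D_def X_def .
qed

text \<open>Multiplied by \<open>(K - 2)!\<close>, the left side is the sum over all orderings of the squared norm
  of a sample of size \<open>n\<close> drawn without replacement from \<open>K\<close> vectors whose squared norms sum to
  \<open>D\<close> and whose sum has squared norm \<open>Q\<close>; the \<open>1/2\<close> comes from \<open>n (K - n) \<le> K (K - 1) / 2\<close>.\<close>

lemma without_replacement_moment_le:
  fixes K n D Q :: real
  assumes K: "2 \<le> K" and n: "0 \<le> n" "n \<le> K" and D: "0 \<le> D" and Q: "0 \<le> Q"
  shows "(K - 1) * n * D + n * (n - 1) * (Q - D) \<le> K * (K - 1) * ((n / K)\<^sup>2 * Q + D / 2)"
proof -
  have i1: "n * (K - n) \<le> K * (K - 1) / 2"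
  proof -
    have "0 \<le> (K - 2 * n)\<^sup>2 + K * (K - 2)"
      using K by simp
    then show ?thesis
      by (simp add: power2_eq_square algebra_simps)
  qed
  have i2: "n * (n - 1) \<le> (K - 1) * n\<^sup>2 / K"
  proof -
    have "n * (n - 1) * K \<le> (K - 1) * n\<^sup>2"
      using mult_left_mono[OF n(2,1)] by (simp add: power2_eq_square algebra_simps)
    then show ?thesis
      using K by (simp add: pos_le_divide_eq)
  qed
  have "(K - 1) * n * D + n * (n - 1) * (Q - D) = n * (K - n) * D + n * (n - 1) * Q"
    by (simp add: algebra_simps)
  also have "\<dots> \<le> K * (K - 1) / 2 * D + (K - 1) * n\<^sup>2 / K * Q"
    using i1 i2 D Q by (intro add_mono mult_right_mono)
  also have "\<dots> = K * (K - 1) * ((n / K)\<^sup>2 * Q + D / 2)"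
    using K by (simp add: field_simps power2_eq_square)
  finally show ?thesis .
qed

lemma sum_permutations_power2_norm_sum_le:
  fixes v :: "'a \<Rightarrow> 'b::real_inner"
  assumes S: "finite S" and L: "L \<subseteq> S"
  shows "(\<Sum>p | p permutes S. (norm (\<Sum>l\<in>L. v (p l)))\<^sup>2)
       \<le> fact (card S) * ((card L / card S)\<^sup>2 * (norm (\<Sum>a\<in>S. v a))\<^sup>2 + (\<Sum>a\<in>S. (norm (v a))\<^sup>2) / 2)"
proof -
  define K where "K = real (card S)"
  define n where "n = real (card L)"
  define D where "D = (\<Sum>a\<in>S. (norm (v a))\<^sup>2)"
  define Q where "Q = (norm (\<Sum>a\<in>S. v a))\<^sup>2"
  have D0: "D \<ge> 0"
    unfolding D_def by (simp add: sum_nonneg)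
  have exact: "(\<Sum>p | p permutes S. (norm (\<Sum>l\<in>L. v (p l)))\<^sup>2)
      = fact (card S - 1) * n * D + fact (card S - 2) * n * (n - 1) * (Q - D)"
    using sum_permutations_power2_norm_sum[OF S L, of v] power2_norm_sum[OF S, of v]
    unfolding n_def D_def Q_def by simp
  have "L = {} \<or> (card S = 1 \<and> L \<noteq> {}) \<or> card S \<ge> 2"
    using S L by (cases "card S") auto
  then show ?thesis
  proof (elim disjE conjE)
    assume "L = {}"
    then show ?thesis
      using D0 by (simp add: D_def)
  next
    assume "card S = 1" "L \<noteq> {}"
    then obtain a where "S = {a}" "L = {a}"
      using L by (metis card_1_singletonE subset_singletonD)
    then show ?thesis
      using exact D0 by (simp add: n_def D_def Q_def)
  next
    assume "card S \<ge> 2"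
    then obtain m where m: "card S = Suc (Suc m)"
      by (metis add_2_eq_Suc le_Suc_ex)
    have fact_S: "fact (card S - 1) = (K - 1) * fact (card S - 2)"
      "fact (card S) = K * (K - 1) * fact (card S - 2)"
      unfolding K_def m by (simp_all add: algebra_simps)
    have "(K - 1) * n * D + n * (n - 1) * (Q - D) \<le> K * (K - 1) * ((n / K)\<^sup>2 * Q + D / 2)"
      using m card_mono[OF S L] D0 by (intro without_replacement_moment_le) (auto simp: K_def n_def Q_def)
    from mult_left_mono[OF this, of "fact (card S - 2)"] show ?thesis
      unfolding exact fact_S n_def[symmetric] K_def[symmetric] D_def[symmetric] Q_def[symmetric]
      by (simp add: algebra_simps diff_divide_distrib)
  qed
qed

lemma sum_permutations_power2_norm_add_sum_le:
  fixes u :: "'b::real_inner" and w :: "'a \<Rightarrow> 'b"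
  assumes S: "finite S" and L: "L \<subseteq> S"
  shows "(\<Sum>p | p permutes S. (norm (u + (\<Sum>l\<in>L. w (p l))))\<^sup>2)
       \<le> fact (card S) * ((norm (u + (card L / card S) *\<^sub>R (\<Sum>a\<in>S. w a)))\<^sup>2 + (\<Sum>a\<in>S. (norm (w a))\<^sup>2) / 2)"
proof -
  let ?P = "{p. p permutes S}"
  define m where "m = (card L / card S) *\<^sub>R (\<Sum>a\<in>S. w a)"
  define D where "D = (\<Sum>a\<in>S. (norm (w a))\<^sup>2)"
  have mean: "(\<Sum>p\<in>?P. u \<bullet> (\<Sum>l\<in>L. w (p l))) = fact (card S) * (u \<bullet> m)"
  proof (cases "L = {}")
    case True
    then show ?thesis
      by (simp add: m_def)
  next
    case False
    then have card_pos: "card S > 0"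
      using S L card_gt_0_iff by blast
    have "(\<Sum>p\<in>?P. u \<bullet> (\<Sum>l\<in>L. w (p l))) = (\<Sum>l\<in>L. \<Sum>p\<in>?P. u \<bullet> w (p l))"
      by (simp add: inner_sum_right) (rule sum.swap)
    also have "\<dots> = (\<Sum>l\<in>L. fact (card S - 1) * (u \<bullet> (\<Sum>a\<in>S. w a)))"
      using sum_permutations_apply[OF S, of _ "\<lambda>a. u \<bullet> w a"] L
      by (intro sum.cong refl) (auto simp: inner_sum_right)
    also have "\<dots> = fact (card S) * (u \<bullet> m)"
      using card_pos by (simp add: m_def fact_reduce[OF card_pos])
    finally show ?thesis .
  qed
  have "(\<Sum>p\<in>?P. (norm (u + (\<Sum>l\<in>L. w (p l))))\<^sup>2)
      = fact (card S) * (norm u)\<^sup>2 + 2 * (\<Sum>p\<in>?P. u \<bullet> (\<Sum>l\<in>L. w (p l)))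
        + (\<Sum>p\<in>?P. (norm (\<Sum>l\<in>L. w (p l)))\<^sup>2)"
    using S by (simp add: power2_norm_add sum.distrib sum_distrib_left card_permutations)
  also have "\<dots> \<le> fact (card S) * (norm u)\<^sup>2 + 2 * (fact (card S) * (u \<bullet> m)) + fact (card S) * ((norm m)\<^sup>2 + D / 2)"
    using sum_permutations_power2_norm_sum_le[OF S L, of w]
    unfolding mean by (simp add: m_def D_def power_mult_distrib power_divide)
  also have "\<dots> = fact (card S) * ((norm (u + m))\<^sup>2 + D / 2)"
    by (simp add: power2_norm_add algebra_simps inner_commute)
  finally show ?thesis
    unfolding m_def D_def .
qed

lemma sum_permutations_inner_zero_mean:
  fixes v :: "'a \<Rightarrow> 'b::real_inner"
  assumes S: "finite S" and zero: "(\<Sum>a\<in>S. v a) = 0" and L: "L \<subseteq> S" and t: "t \<in> S - L"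
  shows "(\<Sum>p | p permutes S. (\<Sum>l\<in>L. v (p l)) \<bullet> v (p t))
       = - (real (card L) * fact (card S - 2) * (\<Sum>a\<in>S. (norm (v a))\<^sup>2))"
proof -
  have off: "(\<Sum>a\<in>S. \<Sum>b\<in>S - {a}. v a \<bullet> v b) = - (\<Sum>a\<in>S. (norm (v a))\<^sup>2)"
    using power2_norm_sum[OF S, of v] zero by simp
  have "(\<Sum>p | p permutes S. (\<Sum>l\<in>L. v (p l)) \<bullet> v (p t)) = (\<Sum>l\<in>L. \<Sum>p | p permutes S. v (p l) \<bullet> v (p t))"
    by (simp add: inner_sum_left) (rule sum.swap)
  also have "\<dots> = (\<Sum>l\<in>L. - (fact (card S - 2) * (\<Sum>a\<in>S. (norm (v a))\<^sup>2)))"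
    using sum_permutations_apply2[OF S, of _ t "\<lambda>a b. v a \<bullet> v b"] L t off
    by (intro sum.cong refl) auto
  finally show ?thesis
    by simp
qed

lemma sum_permutations_zero_mean_le:
  fixes v :: "'a \<Rightarrow> 'b::real_inner"
  assumes S: "finite S" and zero: "(\<Sum>a\<in>S. v a) = 0" and L: "L \<subseteq> S" and t: "t \<in> S - L"
    and c: "c \<ge> 0" and d: "d \<ge> 0"
  shows "(\<Sum>p | p permutes S. (norm (c *\<^sub>R (\<Sum>l\<in>L. v (p l)) + d *\<^sub>R v (p t)))\<^sup>2)
       \<le> fact (card S) * (c\<^sup>2 / 2 + d\<^sup>2 / card S) * (\<Sum>a\<in>S. (norm (v a))\<^sup>2)"
proof -
  let ?P = "{p. p permutes S}"
  define D where "D = (\<Sum>a\<in>S. (norm (v a))\<^sup>2)"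
  define A where "A p = (\<Sum>l\<in>L. v (p l))" for p
  have D0: "D \<ge> 0"
    unfolding D_def by (simp add: sum_nonneg)
  have card_pos: "card S > 0"
    using S t card_gt_0_iff by blast
  have sq: "(\<Sum>p\<in>?P. (norm (A p))\<^sup>2) \<le> fact (card S) * (D / 2)"
    using sum_permutations_power2_norm_sum_le[OF S L, of v] zero by (simp add: A_def D_def)
  have cross: "(\<Sum>p\<in>?P. A p \<bullet> v (p t)) \<le> 0"
    using sum_permutations_inner_zero_mean[OF S zero L t] D0 by (simp add: A_def D_def)
  have last: "(\<Sum>p\<in>?P. (norm (v (p t)))\<^sup>2) = fact (card S) / card S * D"
    using sum_permutations_apply[OF S, of t "\<lambda>a. (norm (v a))\<^sup>2"] t card_pos
    by (simp add: D_def fact_reduce[OF card_pos])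
  have "(\<Sum>p\<in>?P. (norm (c *\<^sub>R A p + d *\<^sub>R v (p t)))\<^sup>2)
      = c\<^sup>2 * (\<Sum>p\<in>?P. (norm (A p))\<^sup>2) + 2 * c * d * (\<Sum>p\<in>?P. A p \<bullet> v (p t))
        + d\<^sup>2 * (\<Sum>p\<in>?P. (norm (v (p t)))\<^sup>2)"
    by (simp add: power2_norm_add power_mult_distrib sum.distrib sum_distrib_left mult_ac)
  also have "\<dots> \<le> c\<^sup>2 * (fact (card S) * (D / 2)) + 0 + d\<^sup>2 * (fact (card S) / card S * D)"
    using sq cross c d unfolding last
    by (intro add_mono mult_left_mono mult_nonneg_nonpos) auto
  also have "\<dots> = fact (card S) * (c\<^sup>2 / 2 + d\<^sup>2 / card S) * D"
    by (simp add: algebra_simps)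
  finally show ?thesis
    unfolding A_def D_def .
qed

section \<open>The sample space\<close>

lemma sum_PiE_apply:
  fixes H :: "'b \<Rightarrow> 'c::comm_semiring_1"
  assumes I: "finite I" "i \<in> I" and B: "\<And>j. j \<in> I \<Longrightarrow> finite (B j)"
  shows "(\<Sum>g\<in>PiE I B. H (g i)) = (\<Prod>j\<in>I - {i}. of_nat (card (B j))) * (\<Sum>y\<in>B i. H y)"
proof -
  define F where "F j y = (if j = i then H y else 1)" for j y
  have "(\<Sum>g\<in>PiE I B. H (g i)) = (\<Sum>g\<in>PiE I B. \<Prod>j\<in>I. F j (g j))"
    using I by (intro sum.cong refl) (simp add: F_def prod.remove)
  also have "\<dots> = (\<Prod>j\<in>I. \<Sum>y\<in>B j. F j y)"
    by (simp add: prod_sum_PiE[OF I(1) B])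
  also have "\<dots> = (\<Sum>y\<in>B i. H y) * (\<Prod>j\<in>I - {i}. of_nat (card (B j)))"
    using I by (simp add: prod.remove F_def)
  finally show ?thesis
    by (simp add: mult.commute)
qed

lemma expectation_sample_space:
  fixes \<Phi> :: "(nat \<Rightarrow> nat) \<Rightarrow> (nat \<Rightarrow> nat \<Rightarrow> nat) \<Rightarrow> real"
    and \<Psi> :: "(nat \<Rightarrow> nat) \<Rightarrow> (nat \<Rightarrow> nat) \<Rightarrow> real"
  assumes \<tau>: "\<And>\<sigma>. \<sigma> permutes {..<M} \<Longrightarrow> \<tau> \<sigma> < M"
    and \<Phi>: "\<And>\<sigma> \<pi>. (\<sigma>, \<pi>) \<in> sample_space M N \<Longrightarrow> \<Phi> \<sigma> \<pi> = \<Psi> \<sigma> (\<pi> (\<tau> \<sigma>))"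
  shows "measure_pmf.expectation (pmf_of_set (sample_space M N)) (\<lambda>(\<sigma>, \<pi>). \<Phi> \<sigma> \<pi>)
       = (\<Sum>\<sigma> | \<sigma> permutes {..<M}. \<Sum>p | p permutes {..<N}. \<Psi> \<sigma> p) / (fact M * fact N)"
proof -
  let ?P = "{\<sigma>. \<sigma> permutes {..<M}}" and ?Q = "PiE {..<M} (\<lambda>_. {p. p permutes {..<N}})"
  have M: "M > 0"
    using \<tau>[OF permutes_id] by simp
  have fin: "finite ?P" "finite ?Q"
    by (simp_all add: finite_permutations finite_PiE)
  have "id \<in> ?P" "(\<lambda>m\<in>{..<M}. id) \<in> ?Q"
    by (simp_all add: permutes_id)
  then have ne: "sample_space M N \<noteq> {}"
    unfolding sample_space_def by blast
  have card: "card (sample_space M N) = fact M * fact N ^ M"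
    by (simp add: sample_space_def card_cartesian_product card_PiE card_permutations)
  have one_client: "(\<Sum>\<pi>\<in>?Q. \<Psi> \<sigma> (\<pi> (\<tau> \<sigma>))) = fact N ^ (M - 1) * (\<Sum>p | p permutes {..<N}. \<Psi> \<sigma> p)"
    if "\<sigma> \<in> ?P" for \<sigma>
    using sum_PiE_apply[of "{..<M}" "\<tau> \<sigma>" "\<lambda>_. {p. p permutes {..<N}}" "\<Psi> \<sigma>"] \<tau> that
    by (simp add: finite_permutations card_permutations)
  have "measure_pmf.expectation (pmf_of_set (sample_space M N)) (\<lambda>(\<sigma>, \<pi>). \<Phi> \<sigma> \<pi>)
      = (\<Sum>(\<sigma>, \<pi>)\<in>?P \<times> ?Q. \<Phi> \<sigma> \<pi>) / card (sample_space M N)"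
    using ne fin by (simp add: integral_pmf_of_set sample_space_def)
  also have "(\<Sum>(\<sigma>, \<pi>)\<in>?P \<times> ?Q. \<Phi> \<sigma> \<pi>) = (\<Sum>\<sigma>\<in>?P. \<Sum>\<pi>\<in>?Q. \<Psi> \<sigma> (\<pi> (\<tau> \<sigma>)))"
    unfolding sum.cartesian_product[symmetric] using \<Phi> by (intro sum.cong refl) (auto simp: sample_space_def)
  also have "\<dots> = fact N ^ (M - 1) * (\<Sum>\<sigma>\<in>?P. \<Sum>p | p permutes {..<N}. \<Psi> \<sigma> p)"
    by (simp add: one_client sum_distrib_left)
  finally show ?thesis
    unfolding card by (simp add: power_minus_mult[OF M, symmetric])
qed

section \<open>Gradients\<close>

lemma grad_eqI:
  fixes F :: "'a::real_inner \<Rightarrow> real"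
  assumes "GDERIV F x :> D"
  shows "grad F x = D"
  unfolding grad_def
proof (rule the_equality[where P = "\<lambda>D. GDERIV F x :> D", OF assms])
  fix D' assume "GDERIV F x :> D'"
  then have "(\<lambda>h. h \<bullet> D') = (\<lambda>h. h \<bullet> D)"
    using assms unfolding gderiv_def by (rule has_derivative_unique)
  then have "(D' - D) \<bullet> D' = (D' - D) \<bullet> D"
    by (rule fun_cong)
  then have "(D' - D) \<bullet> (D' - D) = 0"
    by (simp add: inner_diff_right)
  then show "D' = D"
    by simp
qed

lemma GDERIV_grad:
  fixes F :: "'a::euclidean_space \<Rightarrow> real"
  assumes "F differentiable (at x)"
  shows "GDERIV F x :> grad F x"
proof -
  obtain F' where F': "(F has_derivative F') (at x)"
    using assms unfolding differentiable_def by blast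
  have "F' = (\<lambda>h. h \<bullet> adjoint F' 1)"
    using adjoint_works[OF has_derivative_linear[OF F']] by (simp add: fun_eq_iff)
  then have "GDERIV F x :> adjoint F' 1"
    using F' unfolding gderiv_def by simp
  then show ?thesis
    by (simp add: grad_eqI)
qed

lemma GDERIV_scaled_sum:
  fixes F :: "'i \<Rightarrow> 'a::real_inner \<Rightarrow> real"
  assumes "finite A" "\<And>k. k \<in> A \<Longrightarrow> GDERIV (F k) x :> D k"
  shows "GDERIV (\<lambda>x. c * (\<Sum>k\<in>A. F k x)) x :> c *\<^sub>R (\<Sum>k\<in>A. D k)"
proof -
  have "((\<lambda>x. \<Sum>k\<in>A. F k x) has_derivative (\<lambda>h. \<Sum>k\<in>A. h \<bullet> D k)) (at x)"
    using assms unfolding gderiv_def by (intro has_derivative_sum) auto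
  then have "((\<lambda>x. c * (\<Sum>k\<in>A. F k x)) has_derivative (\<lambda>h. c * (\<Sum>k\<in>A. h \<bullet> D k))) (at x)"
    by (rule has_derivative_mult_right)
  then show ?thesis
    unfolding gderiv_def by (simp add: inner_sum_right)
qed

lemma GDERIV_eq_0_if_min:
  assumes "GDERIV F x :> D" and "\<And>y. F x \<le> F y"
  shows "D = 0"
proof -
  have "(\<lambda>h. h \<bullet> D) = (\<lambda>h. 0)"
    using assms unfolding gderiv_def by (intro differential_zero_maxmin[OF UNIV_I open_UNIV]) auto
  then show ?thesis
    by (metis inner_eq_zero_iff)
qed

lemma sum_grad_eq_0_if_min:
  fixes f :: "nat \<Rightarrow> nat \<Rightarrow> 'a::euclidean_space \<Rightarrow> real"
  assumes M: "M > 0" and N: "N > 0"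
    and diff: "\<And>m j x. m < M \<Longrightarrow> j < N \<Longrightarrow> f m j differentiable (at x)"
    and min: "\<And>x. (1 / real M) * (\<Sum>m<M. (1 / real N) * (\<Sum>j<N. f m j xs))
                   \<le> (1 / real M) * (\<Sum>m<M. (1 / real N) * (\<Sum>j<N. f m j x))"
  shows "(\<Sum>m<M. \<Sum>j<N. grad (f m j) xs) = 0"
proof -
  have "GDERIV (\<lambda>x. (1 / real M) * (\<Sum>m<M. (1 / real N) * (\<Sum>j<N. f m j x))) xs
      :> (1 / real M) *\<^sub>R (\<Sum>m<M. (1 / real N) *\<^sub>R (\<Sum>j<N. grad (f m j) xs))"
    by (intro GDERIV_scaled_sum GDERIV_grad diff) auto
  then have "(1 / real M) *\<^sub>R (\<Sum>m<M. (1 / real N) *\<^sub>R (\<Sum>j<N. grad (f m j) xs)) = 0"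
    using min by (rule GDERIV_eq_0_if_min)
  then show ?thesis
    using M N by (simp add: scaleR_sum_right[symmetric])
qed

section \<open>The star sequence\<close>

lemma local_iter_eq: "local_iter \<gamma> h x0 n = x0 - \<gamma> *\<^sub>R (\<Sum>k<n. h k)"
  by (induction n) (simp_all add: algebra_simps)

lemma star_round_eq:
  fixes f :: "nat \<Rightarrow> nat \<Rightarrow> 'a::real_inner \<Rightarrow> real"
  assumes C: "C > 0" and \<sigma>: "\<sigma> permutes {..<M}" and \<pi>: "\<And>m. m < M \<Longrightarrow> \<pi> m permutes {..<N}"
    and r: "r * C \<le> M"
  shows "star_round \<gamma> N C f xs \<sigma> \<pi> r = xs - (\<gamma> / C) *\<^sub>R (\<Sum>l<r * C. \<Sum>k<N. grad (f (\<sigma> l) k) xs)"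
  using r
proof (induction r)
  case 0
  then show ?case by simp
next
  case (Suc r)
  define G where "G l = (\<Sum>k<N. grad (f (\<sigma> l) k) xs)" for l
  define x where "x = star_round \<gamma> N C f xs \<sigma> \<pi> r"
  have IH: "x = xs - (\<gamma> / C) *\<^sub>R (\<Sum>l<r * C. G l)"
    using Suc by (simp add: x_def G_def)
  have step: "local_iter \<gamma> (client_steps f xs \<pi> (\<sigma> (r * C + i))) x N = x - \<gamma> *\<^sub>R G (r * C + i)"
    if "i < C" for i
  proof -
    have "\<sigma> (r * C + i) < M"
      using Suc.prems that permutes_in_image[OF \<sigma>] by simp
    then show ?thesis
      unfolding local_iter_eq client_steps_def G_def
      using sum_reindex_permutes[OF \<pi>, of _ "\<lambda>k. grad (f (\<sigma> (r * C + i)) k) xs"] by simp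
  qed
  have split: "(\<Sum>l<Suc r * C. G l) = (\<Sum>l<r * C. G l) + (\<Sum>i<C. G (r * C + i))"
    using sum.atLeastLessThan_concat[of 0 "r * C" "r * C + C" G] sum.shift_bounds_nat_ivl[of G 0 "r * C" C]
    by (simp add: atLeast0LessThan add.commute)
  have "star_round \<gamma> N C f xs \<sigma> \<pi> (Suc r) = (1 / C) *\<^sub>R (\<Sum>i<C. x - \<gamma> *\<^sub>R G (r * C + i))"
    by (simp add: x_def[symmetric] step)
  also have "\<dots> = x - (\<gamma> / C) *\<^sub>R (\<Sum>i<C. G (r * C + i))"
    using C by (simp add: sum_subtractf scaleR_sum_right[symmetric] sum_constant_scaleR algebra_simps)
  also have "\<dots> = xs - (\<gamma> / C) *\<^sub>R (\<Sum>l<Suc r * C. G l)"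
    unfolding IH split by (simp add: scaleR_add_right)
  finally show ?case
    unfolding G_def .
qed

lemma sum_cohort_local_step_le:
  fixes G :: "nat \<Rightarrow> nat \<Rightarrow> 'a::real_inner"
  assumes zero: "(\<Sum>m<M. \<Sum>k<N. G m k) = 0"
    and L: "L \<subseteq> {..<M}" and t: "t < M" "t \<notin> L" and n: "n \<le> N" and c: "c \<ge> 0" and \<gamma>: "\<gamma> \<ge> 0"
  shows "(\<Sum>\<sigma> | \<sigma> permutes {..<M}. \<Sum>p | p permutes {..<N}.
            (norm (c *\<^sub>R (\<Sum>l\<in>L. \<Sum>k<N. G (\<sigma> l) k) + \<gamma> *\<^sub>R (\<Sum>l<n. G (\<sigma> t) (p l))))\<^sup>2)
       \<le> fact M * fact N * ((c\<^sup>2 / 2 + (\<gamma> * real n / real N)\<^sup>2 / real M) * (\<Sum>m<M. (norm (\<Sum>k<N. G m k))\<^sup>2)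
                            + \<gamma>\<^sup>2 / (2 * real M) * (\<Sum>m<M. \<Sum>k<N. (norm (G m k))\<^sup>2))"
proof -
  let ?P = "{\<sigma>. \<sigma> permutes {..<M}}"
  define h where "h m = (\<Sum>k<N. G m k)" for m
  define u where "u \<sigma> = c *\<^sub>R (\<Sum>l\<in>L. h (\<sigma> l))" for \<sigma>
  define d where "d = \<gamma> * n / N"
  define E where "E m = (\<Sum>k<N. (norm (G m k))\<^sup>2)" for m
  have M: "M > 0"
    using t by simp
  have d: "d \<ge> 0"
    unfolding d_def using \<gamma> by simp
  have local: "(\<Sum>p | p permutes {..<N}. (norm (u \<sigma> + \<gamma> *\<^sub>R (\<Sum>l<n. G (\<sigma> t) (p l))))\<^sup>2)
      \<le> fact N * ((norm (u \<sigma> + d *\<^sub>R h (\<sigma> t)))\<^sup>2 + \<gamma>\<^sup>2 / 2 * E (\<sigma> t))" for \<sigma>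
    using sum_permutations_power2_norm_add_sum_le[of "{..<N}" "{..<n}" "u \<sigma>" "\<lambda>k. \<gamma> *\<^sub>R G (\<sigma> t) k"] n
    by (simp add: d_def h_def E_def scaleR_sum_right power_mult_distrib sum_distrib_left sum_divide_distrib mult.commute)
  have cohort: "(\<Sum>\<sigma>\<in>?P. (norm (u \<sigma> + d *\<^sub>R h (\<sigma> t)))\<^sup>2) \<le> fact M * (c\<^sup>2 / 2 + d\<^sup>2 / M) * (\<Sum>m<M. (norm (h m))\<^sup>2)"
    using sum_permutations_zero_mean_le[of "{..<M}" h L t c d] zero L t c d
    by (simp add: u_def h_def)
  have client: "(\<Sum>\<sigma>\<in>?P. E (\<sigma> t)) = fact M / M * (\<Sum>m<M. E m)"
    using sum_permutations_apply[of "{..<M}" t E] t M by (simp add: fact_reduce[of M])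
  have "(\<Sum>\<sigma>\<in>?P. \<Sum>p | p permutes {..<N}. (norm (u \<sigma> + \<gamma> *\<^sub>R (\<Sum>l<n. G (\<sigma> t) (p l))))\<^sup>2)
      \<le> (\<Sum>\<sigma>\<in>?P. fact N * ((norm (u \<sigma> + d *\<^sub>R h (\<sigma> t)))\<^sup>2 + \<gamma>\<^sup>2 / 2 * E (\<sigma> t)))"
    by (rule sum_mono) (rule local)
  also have "\<dots> = fact N * ((\<Sum>\<sigma>\<in>?P. (norm (u \<sigma> + d *\<^sub>R h (\<sigma> t)))\<^sup>2) + \<gamma>\<^sup>2 / 2 * (\<Sum>\<sigma>\<in>?P. E (\<sigma> t)))"
    by (simp only: sum_distrib_left[symmetric] sum.distrib)
  also have "\<dots> \<le> fact N * (fact M * (c\<^sup>2 / 2 + d\<^sup>2 / M) * (\<Sum>m<M. (norm (h m))\<^sup>2) + \<gamma>\<^sup>2 / 2 * (fact M / M * (\<Sum>m<M. E m)))"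
    unfolding client using cohort by simp
  finally show ?thesis
    by (simp add: u_def h_def d_def E_def algebra_simps scaleR_sum_right)
qed

lemma star_iterate_eq:
  fixes f :: "nat \<Rightarrow> nat \<Rightarrow> 'a::real_inner \<Rightarrow> real"
  assumes C: "C > 0" and \<sigma>\<pi>: "(\<sigma>, \<pi>) \<in> sample_space M N" and r: "r * C \<le> M"
  shows "local_iter \<gamma> (client_steps f xs \<pi> m) (star_round \<gamma> N C f xs \<sigma> \<pi> r) n - xs
       = - ((\<gamma> / C) *\<^sub>R (\<Sum>l<r * C. \<Sum>k<N. grad (f (\<sigma> l) k) xs) + \<gamma> *\<^sub>R (\<Sum>l<n. grad (f m (\<pi> m l)) xs))"
proof -
  have \<sigma>: "\<sigma> permutes {..<M}" and \<pi>: "\<And>m. m < M \<Longrightarrow> \<pi> m permutes {..<N}"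
    using \<sigma>\<pi> unfolding sample_space_def by (auto simp: PiE_iff)
  from C \<sigma> \<pi> r have "star_round \<gamma> N C f xs \<sigma> \<pi> r = xs - (\<gamma> / C) *\<^sub>R (\<Sum>l<r * C. \<Sum>k<N. grad (f (\<sigma> l) k) xs)"
    by (rule star_round_eq)
  then show ?thesis
    unfolding local_iter_eq client_steps_def by (simp add: algebra_simps)
qed

lemma expectation_star_iterate_le:
  fixes f :: "nat \<Rightarrow> nat \<Rightarrow> 'a::real_inner \<Rightarrow> real"
  assumes C: "C > 0" and zero: "(\<Sum>m<M. \<Sum>k<N. grad (f m k) xs) = 0"
    and t: "r * C + i < M" and n: "n \<le> N" and \<gamma>: "\<gamma> \<ge> 0"
  shows "measure_pmf.expectation (pmf_of_set (sample_space M N))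
           (\<lambda>(\<sigma>, \<pi>). (norm (local_iter \<gamma> (client_steps f xs \<pi> (\<sigma> (r * C + i)))
                           (star_round \<gamma> N C f xs \<sigma> \<pi> r) n - xs))\<^sup>2)
       \<le> ((\<gamma> / real C)\<^sup>2 / 2 + (\<gamma> * real n / real N)\<^sup>2 / real M) * (\<Sum>m<M. (norm (\<Sum>k<N. grad (f m k) xs))\<^sup>2)
         + \<gamma>\<^sup>2 / (2 * real M) * (\<Sum>m<M. \<Sum>k<N. (norm (grad (f m k) xs))\<^sup>2)"
proof -
  define G where "G m k = grad (f m k) xs" for m k
  have rC: "r * C \<le> M"
    using t by simp
  have fact_pos: "(0::real) < fact M * fact N"
    by simp
  have "measure_pmf.expectation (pmf_of_set (sample_space M N))
           (\<lambda>(\<sigma>, \<pi>). (norm (local_iter \<gamma> (client_steps f xs \<pi> (\<sigma> (r * C + i)))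
                           (star_round \<gamma> N C f xs \<sigma> \<pi> r) n - xs))\<^sup>2)
      = (\<Sum>\<sigma> | \<sigma> permutes {..<M}. \<Sum>p | p permutes {..<N}.
           (norm ((\<gamma> / C) *\<^sub>R (\<Sum>l\<in>{..<r * C}. \<Sum>k<N. G (\<sigma> l) k) + \<gamma> *\<^sub>R (\<Sum>l<n. G (\<sigma> (r * C + i)) (p l))))\<^sup>2)
        / (fact M * fact N)"
  proof (rule expectation_sample_space[where \<tau> = "\<lambda>\<sigma>. \<sigma> (r * C + i)"])
    show "\<sigma> (r * C + i) < M" if "\<sigma> permutes {..<M}" for \<sigma>
      using permutes_in_image[OF that] t by simp
    show "(norm (local_iter \<gamma> (client_steps f xs \<pi> (\<sigma> (r * C + i))) (star_round \<gamma> N C f xs \<sigma> \<pi> r) n - xs))\<^sup>2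
        = (norm ((\<gamma> / C) *\<^sub>R (\<Sum>l\<in>{..<r * C}. \<Sum>k<N. G (\<sigma> l) k)
                 + \<gamma> *\<^sub>R (\<Sum>l<n. G (\<sigma> (r * C + i)) (\<pi> (\<sigma> (r * C + i)) l))))\<^sup>2"
      if "(\<sigma>, \<pi>) \<in> sample_space M N" for \<sigma> \<pi>
      unfolding G_def star_iterate_eq[OF C that rC] norm_minus_cancel ..
  qed
  also have "\<dots> \<le> ((\<gamma> / real C)\<^sup>2 / 2 + (\<gamma> * real n / real N)\<^sup>2 / real M) * (\<Sum>m<M. (norm (\<Sum>k<N. G m k))\<^sup>2)
                  + \<gamma>\<^sup>2 / (2 * real M) * (\<Sum>m<M. \<Sum>k<N. (norm (G m k))\<^sup>2)"
    unfolding pos_divide_le_eq[OF fact_pos] mult.commute[of _ "fact M * fact N"]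
    using t n \<gamma> by (intro sum_cohort_local_step_le[OF zero[folded G_def]]) auto
  finally show ?thesis
    unfolding G_def .
qed

theorem lemma3:
  fixes f :: "nat \<Rightarrow> nat \<Rightarrow> 'a::euclidean_space \<Rightarrow> real"
    and xs :: 'a and \<gamma> :: real and M N C R :: nat
  assumes gamma_pos: "\<gamma> > 0"
    and C_pos: "C > 0" and N_pos: "N > 0"
    and M_eq: "M = C * R"
    and diff: "\<And>m j x. m < M \<Longrightarrow> j < N \<Longrightarrow> f m j differentiable (at x)"
    and minimizer: "\<And>x. (1 / real M) * (\<Sum>m<M. (1 / real N) * (\<Sum>j<N. f m j xs))
                       \<le> (1 / real M) * (\<Sum>m<M. (1 / real N) * (\<Sum>j<N. f m j x))"
    and r_lt: "r < R" and i_lt: "i < C" and j_lt: "j < N"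
  shows "measure_pmf.expectation (pmf_of_set (sample_space M N))
           (\<lambda>(\<sigma>, \<pi>). (norm (local_iter \<gamma> (client_steps f xs \<pi> (\<sigma> (r * C + i)))
                           (star_round \<gamma> N C f xs \<sigma> \<pi> r) (Suc j) - xs))\<^sup>2)
         \<le> \<gamma>\<^sup>2 * (real M * real N ^ 2 / (2 * real C ^ 2) + 2 * real N ^ 2)
              * ((1 / real M) * (\<Sum>m<M. (norm (grad (\<lambda>x. (1 / real N) * (\<Sum>k<N. f m k x)) xs))\<^sup>2))
           + \<gamma>\<^sup>2 * real N / 2
              * ((1 / (real M * real N)) * (\<Sum>m<M. \<Sum>k<N. (norm (grad (f m k) xs))\<^sup>2))"
proof -
  define H where "H = (\<Sum>m<M. (norm (\<Sum>k<N. grad (f m k) xs))\<^sup>2)"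
  define V where "V = (\<Sum>m<M. \<Sum>k<N. (norm (grad (f m k) xs))\<^sup>2)"
  have t: "r * C + i < M"
    using less_le_trans[of "r * C + i" "Suc r * C" "R * C"] mult_le_mono1[of "Suc r" R C] r_lt i_lt M_eq
    by (simp add: mult.commute)
  have zero: "(\<Sum>m<M. \<Sum>k<N. grad (f m k) xs) = 0"
    using t N_pos diff minimizer by (intro sum_grad_eq_0_if_min) auto
  have client: "(\<Sum>m<M. (norm (grad (\<lambda>x. (1 / real N) * (\<Sum>k<N. f m k x)) xs))\<^sup>2) = H / (real N)\<^sup>2"
  proof -
    have "grad (\<lambda>x. (1 / real N) * (\<Sum>k<N. f m k x)) xs = (1 / real N) *\<^sub>R (\<Sum>k<N. grad (f m k) xs)"
      if "m < M" for m
      using that by (intro grad_eqI GDERIV_scaled_sum GDERIV_grad diff) auto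
    then show ?thesis
      unfolding H_def by (simp add: power_divide sum_divide_distrib)
  qed
  have "(\<gamma> * real (Suc j) / real N)\<^sup>2 \<le> \<gamma>\<^sup>2"
    using j_lt N_pos by (simp add: power_divide power_mult_distrib divide_le_eq mult_left_mono)
  then have step_coeff: "(\<gamma> * real (Suc j) / real N)\<^sup>2 \<le> 2 * \<gamma>\<^sup>2"
    using zero_le_power2[of \<gamma>] by linarith
  note expectation_star_iterate_le[OF C_pos zero t Suc_leI[OF j_lt] less_imp_le[OF gamma_pos],
      folded H_def V_def]
  also have "((\<gamma> / real C)\<^sup>2 / 2 + (\<gamma> * real (Suc j) / real N)\<^sup>2 / real M) * H + \<gamma>\<^sup>2 / (2 * real M) * V
      \<le> ((\<gamma> / real C)\<^sup>2 / 2 + 2 * \<gamma>\<^sup>2 / real M) * H + \<gamma>\<^sup>2 / (2 * real M) * V"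
    unfolding H_def V_def
    by (intro add_mono mult_right_mono divide_right_mono) (use step_coeff in \<open>auto simp: sum_nonneg\<close>)
  also have "\<dots> = \<gamma>\<^sup>2 * (real M * real N ^ 2 / (2 * real C ^ 2) + 2 * real N ^ 2)
              * ((1 / real M) * (\<Sum>m<M. (norm (grad (\<lambda>x. (1 / real N) * (\<Sum>k<N. f m k x)) xs))\<^sup>2))
           + \<gamma>\<^sup>2 * real N / 2
              * ((1 / (real M * real N)) * (\<Sum>m<M. \<Sum>k<N. (norm (grad (f m k) xs))\<^sup>2))"
    unfolding client V_def using t N_pos C_pos by (simp add: field_simps)
  finally show ?thesis .
qed

end
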